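(* Let $R$ be a commutative ring and $\mathcal P$ a class of pairs $(L,M)$ of $R$-modules with $L\subseteq M$ (all pairs with both modules in one fixed category among all, finitely generated, Artinian, or Matlis-dualizable $R$-modules). Let $\Gamma$ be a directed poset and $\{p_j\mid j\in\Gamma\}$ pair operations on $\mathcal P$ with $p_i\le p_j$ whenever $i\le j$, and let $p=\varinjlim_{j\in\Gamma}p_j$, i.e. $p(L,M)=\bigcup_{j\in\Gamma}p_j(L,M)$. If every $p_j$ is hereditary, then $p$ is hereditary.
   Context: A pair operation on $\mathcal P$ assigns to each $(L,M)\in\mathcal P$ a submodule $p(L,M)\subseteq M$ with $\phi(p(L,M))=p(\phi(L),M')$ for every isomorphism $\phi:M\to M'$. $p\le p'$ means $p(L,M)\subseteq p'(L,M)$ for all pairs. A poset is directed if any two elements have a common upper bound. $p$ is hereditary if $p(L,N)=p(L,M)\cap N$ whenever $L\subseteq N\subseteq M$ (with the pairs in $\mathcal P$). *)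

theory Defs
  imports "HOL-Algebra.Module"
begin

definition is_pair :: "('r,'rr) ring_scheme \<Rightarrow> 'm set \<Rightarrow> ('r,'m) module \<Rightarrow> bool" where
  "is_pair R L M \<longleftrightarrow> module R M \<and> submodule L R M"

definition module_iso :: "('r,'rr) ring_scheme \<Rightarrow> ('r,'m) module \<Rightarrow> ('r,'m) module \<Rightarrow> ('m \<Rightarrow> 'm) \<Rightarrow> bool" where
  "module_iso R M M' phi \<longleftrightarrow>
     module R M \<and> module R M' \<and> bij_betw phi (carrier M) (carrier M') \<and>
     (\<forall>x\<in>carrier M. \<forall>y\<in>carrier M. phi (x \<oplus>\<^bsub>M\<^esub> y) = phi x \<oplus>\<^bsub>M'\<^esub> phi y) \<and>
     (\<forall>a\<in>carrier R. \<forall>x\<in>carrier M. phi (a \<odot>\<^bsub>M\<^esub> x) = a \<odot>\<^bsub>M'\<^esub> phi x)"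

definition submodule_of :: "('r,'rr) ring_scheme \<Rightarrow> ('r,'m) module \<Rightarrow> ('r,'m) module \<Rightarrow> bool" where
  "submodule_of R N M \<longleftrightarrow> submodule (carrier N) R M \<and> N = M\<lparr>carrier := carrier N\<rparr>"

definition pair_operation ::
  "('r,'rr) ring_scheme \<Rightarrow> ('m set \<Rightarrow> ('r,'m) module \<Rightarrow> bool) \<Rightarrow> ('m set \<Rightarrow> ('r,'m) module \<Rightarrow> 'm set) \<Rightarrow> bool" where
  "pair_operation R P p \<longleftrightarrow>
     (\<forall>L M. P L M \<longrightarrow> submodule (p L M) R M) \<and>
     (\<forall>L M M' phi. P L M \<longrightarrow> P (phi ` L) M' \<longrightarrow> module_iso R M M' phi \<longrightarrow>
        phi ` (p L M) = p (phi ` L) M')"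

definition hereditary ::
  "('r,'rr) ring_scheme \<Rightarrow> ('m set \<Rightarrow> ('r,'m) module \<Rightarrow> bool) \<Rightarrow> ('m set \<Rightarrow> ('r,'m) module \<Rightarrow> 'm set) \<Rightarrow> bool" where
  "hereditary R P p \<longleftrightarrow>
     (\<forall>L N M. P L N \<longrightarrow> P L M \<longrightarrow> submodule_of R N M \<longrightarrow> p L N = p L M \<inter> carrier N)"

definition directed_set :: "'j::order set \<Rightarrow> bool" where
  "directed_set \<Gamma> \<longleftrightarrow> (\<forall>i\<in>\<Gamma>. \<forall>j\<in>\<Gamma>. \<exists>k\<in>\<Gamma>. i \<le> k \<and> j \<le> k)"

end

theory Submission
  imports Defs
begin

lemma hereditary_UN:
  assumes "\<And>j. j \<in> J \<Longrightarrow> hereditary R P (ps j)"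
  shows "hereditary R P (\<lambda>L M. \<Union>j\<in>J. ps j L M)"
  unfolding hereditary_def
proof (intro allI impI)
  fix L N M
  assume "P L N" "P L M" "submodule_of R N M"
  then have "ps j L N = ps j L M \<inter> carrier N" if "j \<in> J" for j
    using assms that unfolding hereditary_def by blast
  then show "(\<Union>j\<in>J. ps j L N) = (\<Union>j\<in>J. ps j L M) \<inter> carrier N"
    by auto
qed

text \<open>Heredity passes to arbitrary unions since intersecting with a submodule distributes
  over them; directedness and monotonicity are only needed to make the union a pair operation.\<close>

theorem proposition6p8:
  fixes R :: "('r,'rr) ring_scheme"
    and P :: "'m set \<Rightarrow> ('r,'m) module \<Rightarrow> bool"
    and \<Gamma> :: "'j::order set"
    and ps :: "'j \<Rightarrow> 'm set \<Rightarrow> ('r,'m) module \<Rightarrow> 'm set"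
  assumes "cring R"
    and "\<And>L M. P L M \<Longrightarrow> is_pair R L M"
    and "directed_set \<Gamma>"
    and "\<And>j. j \<in> \<Gamma> \<Longrightarrow> pair_operation R P (ps j)"
    and "\<And>i j L M. i \<in> \<Gamma> \<Longrightarrow> j \<in> \<Gamma> \<Longrightarrow> i \<le> j \<Longrightarrow> P L M \<Longrightarrow> ps i L M \<subseteq> ps j L M"
    and "\<And>j. j \<in> \<Gamma> \<Longrightarrow> hereditary R P (ps j)"
  shows "hereditary R P (\<lambda>L M. \<Union>j\<in>\<Gamma>. ps j L M)"
  using assms(6) by (rule hereditary_UN)

end
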